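(* Let $\hat N$ be any population size estimator which is consistent for the model consisting of all probability vectors $(p_x)_{x\in\{0,1\}^L}$ with all $p_x>0$ and $\gamma=0$. Then for any probability vector $(p_x)$ with all $p_x>0$, $$\hat N = \Big(1+\tfrac{p_{\mathbf{0}}}{1-p_{\mathbf{0}}}e^{\gamma} + o(1)\Big)\, n_{\text{obs}},$$ where $o(1)$ denotes a term tending to zero (almost surely) as $N\to\infty$.
   Context: Multiple systems estimation setting with $L\ge 2$ lists: individuals $i=1,2,3,\dots$ have independent, identically distributed list inclusion patterns $W_i\in\{0,1\}^L$ with $\mathbb{P}(W_i=x)=p_x>0$; $\mathbf{0}=(0,\dots,0)$ denotes non-observation. For population size $N$, the observed counts are $n_x^{(N)}=\#\{i\le N: W_i=x\}$, $x\neq\mathbf{0}$, and $n_{\text{obs}}=\sum_{x\ne\mathbf{0}}n_x^{(N)}$. A population size estimator is a function of the observed counts; it is consistent for a model if $\hat N/N\to1$ almost surely as $N\to\infty$ whenever $(p_x)$ belongs to the model. The full-way interaction term is $\gamma=\sum_{x\in\{0,1\}^L}(-1)^{|x|+1}\log p_x$ with $|x|=\sum_i x_i$. *)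

theory Defs
  imports "HOL-Probability.Probability"
begin

text \<open>Inclusion patterns x in {0,1}^L are encoded as subsets of {..<L}
  (the set of lists an individual appears on); the unobserved pattern 0 is the
  empty set and |x| is card x.  Individuals' patterns W_1, W_2, ... are i.i.d.
  with law P, realised canonically on the stream space of P: W_i = w !! i.\<close>

definition counts :: "nat \<Rightarrow> nat set stream \<Rightarrow> nat set \<Rightarrow> nat" where
  "counts N w x = (if x = {} then 0 else card {i. i < N \<and> w !! i = x})"

definition nobs :: "nat \<Rightarrow> nat set stream \<Rightarrow> nat" where
  "nobs N w = card {i. i < N \<and> w !! i \<noteq> {}}"

definition full_interaction :: "nat \<Rightarrow> nat set pmf \<Rightarrow> real" where
  "full_interaction L P = (\<Sum>x\<in>Pow {..<L}. (-1) ^ (card x + 1) * ln (pmf P x))"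

definition consistent_gamma0 :: "nat \<Rightarrow> ((nat set \<Rightarrow> nat) \<Rightarrow> real) \<Rightarrow> bool" where
  "consistent_gamma0 L E \<longleftrightarrow>
     (\<forall>Q. set_pmf Q = Pow {..<L} \<and> full_interaction L Q = 0 \<longrightarrow>
        (AE w in stream_space (measure_pmf Q).
           (\<lambda>N. E (counts N w) / real N) \<longlonglongrightarrow> 1))"

end

theory Submission
  imports Defs
begin

text \<open>
  Only the observed individuals enter the counts. Deleting the unobserved ones from the i.i.d.
  stream W_1, W_2, ... leaves an i.i.d. stream whose law is P conditioned on observation, and
  the counts n_x^(N) are the pattern counts among its first n_obs^(N) entries. Multiplying p_0
  by exp gamma and renormalizing gives a model Q with vanishing full-way interaction and the same
  conditional law of the observed patterns. Under Q the estimator is consistent, and n_obs / N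
  tends to Q(observed) by the strong law of large numbers, so along the observed stream the
  estimate divided by the number of observations tends to 1 / Q(observed) almost surely. This
  event depends on the observed stream only, hence it has probability one under P as well, and
  1 / Q(observed) = 1 + p_0 / (1 - p_0) exp gamma.
\<close>

section \<open>Strong law of large numbers for frequencies\<close>

definition count_in :: "'a set \<Rightarrow> nat \<Rightarrow> 'a stream \<Rightarrow> nat" where
  "count_in A n w = card {i. i < n \<and> w !! i \<in> A}"

lemma count_in_eq_length_filter: "count_in A n w = length (filter (\<lambda>x. x \<in> A) (stake n w))"
  by (simp add: count_in_def length_filter_conv_card stake_nth cong: conj_cong)

lemma count_in_0 [simp]: "count_in A 0 w = 0"
  by (simp add: count_in_def)

lemma count_in_SCons: "count_in A (Suc n) (x ## w) = (if x \<in> A then 1 else 0) + count_in A n w"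
  by (simp add: count_in_eq_length_filter)

lemma count_in_Suc: "count_in A (Suc n) w = count_in A n w + (if w !! n \<in> A then 1 else 0)"
  by (simp add: count_in_eq_length_filter stake_Suc del: stake.simps)

lemma count_in_add_count_in_Compl: "count_in A n w + count_in (- A) n w = n"
  by (simp add: count_in_eq_length_filter sum_length_filter_compl)

lemma count_in_eq_sum: "count_in A n w = (\<Sum>i<n. if w !! i \<in> A then 1 else 0)"
  by (induction n) (simp_all add: count_in_Suc)

lemma measurable_snth_count_space [measurable]:
  "(\<lambda>w. f (w !! i)) \<in> measurable (stream_space (measure_pmf P)) (count_space UNIV)"
proof -
  have "(\<lambda>w. w !! i) \<in> measurable (stream_space (measure_pmf P)) (measure_pmf P)" by simp
  moreover have "f \<in> measurable (measure_pmf P) (count_space UNIV)" by simp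
  ultimately show ?thesis by (rule measurable_compose)
qed

lemma measurable_count_in [measurable]:
  "(\<lambda>w. count_in A n w) \<in> measurable (stream_space (measure_pmf P)) (count_space UNIV)"
  unfolding count_in_eq_sum by measurable

lemma nn_integral_exp_count_in:
  fixes P :: "'a pmf" and s :: real
  shows "(\<integral>\<^sup>+w. exp (s * real (count_in A n w)) \<partial>stream_space (measure_pmf P))
     = ennreal (exp s * measure P A + (1 - measure P A)) ^ n"
proof (induction n)
  case 0
  interpret prob_space "stream_space (measure_pmf P)"
    by (rule prob_space.prob_space_stream_space) (rule measure_pmf.prob_space_axioms)
  show ?case by (simp add: emeasure_space_1)
next
  case (Suc n)
  let ?S = "stream_space (measure_pmf P)"
  have step: "(\<integral>\<^sup>+x. exp (s * (if x \<in> A then 1 else 0)) \<partial>measure_pmf P)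
      = ennreal (exp s * measure P A + (1 - measure P A))"
  proof -
    have "(\<integral>\<^sup>+x. exp (s * (if x \<in> A then 1 else 0)) \<partial>measure_pmf P)
        = (\<integral>\<^sup>+x. ennreal (exp s) * indicator A x + indicator (- A) x \<partial>measure_pmf P)"
      by (intro nn_integral_cong) (auto split: split_indicator)
    also have "\<dots> = ennreal (exp s) * measure P A + measure P (- A)"
      by (subst nn_integral_add) (auto simp: nn_integral_cmult_indicator measure_pmf.emeasure_eq_measure)
    also have "measure P (- A) = 1 - measure P A"
      using measure_pmf.prob_compl[of A P] by (simp add: Compl_eq_Diff_UNIV)
    finally show ?thesis
      by (simp add: ennreal_mult ennreal_plus)
  qed
  have "(\<integral>\<^sup>+w. exp (s * real (count_in A (Suc n) w)) \<partial>?S)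
      = (\<integral>\<^sup>+x. \<integral>\<^sup>+w. exp (s * real (count_in A (Suc n) (x ## w))) \<partial>?S \<partial>measure_pmf P)"
    by (rule prob_space.nn_integral_stream_space[OF measure_pmf.prob_space_axioms]) measurable
  also have "\<dots> = (\<integral>\<^sup>+x. exp (s * (if x \<in> A then 1 else 0)) *
      (\<integral>\<^sup>+w. exp (s * real (count_in A n w)) \<partial>?S) \<partial>measure_pmf P)"
    by (subst nn_integral_cmult[symmetric]) (auto intro!: nn_integral_cong
        simp: count_in_SCons ennreal_mult[symmetric] exp_add[symmetric] distrib_left)
  also have "\<dots> = ennreal (exp s * measure P A + (1 - measure P A)) ^ Suc n"
    by (simp add: nn_integral_multc step Suc)
  finally show ?case .
qed

lemma bernoulli_mgf_less_exp:
  fixes q e :: real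
  assumes "0 \<le> q" "q \<le> 1" "0 < e" "e \<le> 1"
  shows "exp (e / 2) * q + (1 - q) < exp (e / 2 * (q + e))"
proof -
  define s where "s = e / 2"
  have s: "0 < s" "s \<le> 1" "e = 2 * s" using assms by (auto simp: s_def)
  have "exp s * q \<le> (1 + s + s\<^sup>2) * q"
    using exp_bound[of s] s assms by (intro mult_right_mono) auto
  also have "\<dots> \<le> q + s * q + s\<^sup>2"
    using assms s by (simp add: algebra_simps power2_eq_square mult_left_le)
  also have "\<dots> < q + s * (q + e)"
    using s by (simp add: algebra_simps power2_eq_square)
  finally have "exp s * q + (1 - q) < 1 + s * (q + e)" by simp
  also have "\<dots> \<le> exp (s * (q + e))" by (rule exp_ge_add_one_self)
  finally show ?thesis by (simp add: s_def)
qed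

lemma AE_eventually_count_in_less:
  fixes P :: "'a pmf" and e :: real
  assumes e: "0 < e" "e \<le> 1"
  shows "AE w in stream_space (measure_pmf P).
           eventually (\<lambda>n. real (count_in A n w) < real n * (measure P A + e)) sequentially"
proof -
  let ?S = "stream_space (measure_pmf P)"
  interpret S: prob_space ?S
    by (rule prob_space.prob_space_stream_space) (rule measure_pmf.prob_space_axioms)
  define q where "q = measure P A"
  define s where "s = e / 2"
  define m where "m = exp s * q + (1 - q)"
  define r where "r = m / exp (s * (q + e))"
  have q: "0 \<le> q" "q \<le> 1" unfolding q_def by auto
  have "0 \<le> m" "m < exp (s * (q + e))"
    using q bernoulli_mgf_less_exp[OF q e] by (auto simp: m_def s_def)
  then have r: "0 \<le> r" "r < 1" unfolding r_def by auto
  define B where "B n = {w \<in> space ?S. real n * (q + e) \<le> real (count_in A n w)}" for n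
  have B_sets: "B n \<in> sets ?S" for n unfolding B_def by measurable
  have "measure ?S (B n) \<le> r ^ n" for n
  proof -
    have "emeasure ?S (B n) \<le> ennreal (exp (- s * (real n * (q + e)))) *
        (\<integral>\<^sup>+w. ennreal (exp (s * real (count_in A n w))) * indicator (space ?S) w \<partial>?S)"
      unfolding B_def using e by (intro Chernoff_ineq_nn_integral_ge) (auto simp: s_def)
    also have "(\<integral>\<^sup>+w. ennreal (exp (s * real (count_in A n w))) * indicator (space ?S) w \<partial>?S)
        = ennreal m ^ n"
      by (simp add: nn_integral_exp_count_in m_def q_def)
    also have "ennreal (exp (- s * (real n * (q + e)))) * ennreal m ^ n = ennreal (r ^ n)"
    proof -
      have "exp (- s * (real n * (q + e))) = exp (real n * - (s * (q + e)))"
        by (simp add: algebra_simps)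
      also have "\<dots> = inverse (exp (s * (q + e))) ^ n"
        unfolding exp_of_nat_mult exp_minus ..
      finally have "exp (- s * (real n * (q + e))) * m ^ n = r ^ n"
        unfolding r_def divide_inverse power_mult_distrib by (simp only: mult.commute)
      then show ?thesis
        by (simp only: ennreal_power[OF \<open>0 \<le> m\<close>] ennreal_mult'[OF exp_ge_zero, symmetric])
    qed
    finally have "ennreal (measure ?S (B n)) \<le> ennreal (r ^ n)"
      by (simp add: S.emeasure_eq_measure)
    then show ?thesis
      using r by (simp add: ennreal_le_iff)
  qed
  then have "summable (\<lambda>n. measure ?S (B n))"
    using r by (intro summable_comparison_test'[OF summable_geometric, of r 0]) auto
  then have "AE w in ?S. eventually (\<lambda>n. w \<in> space ?S - B n) sequentially"
    by (intro borel_cantelli_AE1 B_sets) (auto simp: S.emeasure_eq_measure)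
  then show ?thesis
    by (rule eventually_mono) (auto elim!: eventually_mono simp: B_def q_def not_le)
qed

lemma tendsto_frequency_of_upper_bounds:
  fixes c d :: "nat \<Rightarrow> nat" and q :: real
  assumes cd: "\<And>n. c n + d n = n"
    and c: "\<And>k. eventually (\<lambda>n. real (c n) < real n * (q + 1 / real (Suc k))) sequentially"
    and d: "\<And>k. eventually (\<lambda>n. real (d n) < real n * (1 - q + 1 / real (Suc k))) sequentially"
  shows "(\<lambda>n. real (c n) / real n) \<longlonglongrightarrow> q"
proof (rule LIMSEQ_I)
  fix r :: real
  assume "0 < r"
  then obtain k where k: "1 / real (Suc k) < r"
    using reals_Archimedean by (auto simp: inverse_eq_divide)
  define \<epsilon> where "\<epsilon> = 1 / real (Suc k)"
  obtain N where "\<And>n. n \<ge> N \<Longrightarrow>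
      real (c n) < real n * (q + \<epsilon>) \<and> real (d n) < real n * (1 - q + \<epsilon>)"
    using eventually_conj[OF c[of k] d[of k]] unfolding eventually_sequentially \<epsilon>_def by blast
  then have "norm (real (c n) / real n - q) < r" if "n \<ge> max N 1" for n
  proof -
    have "real (c n) < real n * (q + \<epsilon>)" "real n - real (c n) < real n * (1 - q + \<epsilon>)"
      using that cd[of n] \<open>\<And>n. n \<ge> N \<Longrightarrow> _\<close>[of n] by (auto simp flip: of_nat_add)
    moreover have "real n > 0" using that by simp
    ultimately have "real (c n) / real n < q + \<epsilon>" "q - \<epsilon> < real (c n) / real n"
      by (simp_all add: divide_less_eq less_divide_eq algebra_simps)
    then have "\<bar>real (c n) / real n - q\<bar> < \<epsilon>"
      by linarith
    then show ?thesis using k by (simp add: \<epsilon>_def)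
  qed
  then show "\<exists>N. \<forall>n\<ge>N. norm (real (c n) / real n - q) < r" by blast
qed

lemma AE_frequency_tendsto:
  fixes P :: "'a pmf"
  shows "AE w in stream_space (measure_pmf P).
           (\<lambda>n. real (count_in A n w) / real n) \<longlonglongrightarrow> measure P A"
proof -
  have "measure P (- A) = 1 - measure P A"
    using measure_pmf.prob_compl[of A P] by (simp add: Compl_eq_Diff_UNIV)
  then have "AE w in stream_space (measure_pmf P).
      eventually (\<lambda>n. real (count_in (- A) n w) < real n * (1 - measure P A + 1 / real (Suc k))) sequentially"
    for k using AE_eventually_count_in_less[where e = "1 / real (Suc k)" and A = "- A" and P = P] by simp
  moreover have "AE w in stream_space (measure_pmf P).
      eventually (\<lambda>n. real (count_in A n w) < real n * (measure P A + 1 / real (Suc k))) sequentially"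
    for k by (rule AE_eventually_count_in_less) auto
  ultimately have "AE w in stream_space (measure_pmf P). \<forall>k.
      eventually (\<lambda>n. real (count_in A n w) < real n * (measure P A + 1 / real (Suc k))) sequentially \<and>
      eventually (\<lambda>n. real (count_in (- A) n w) < real n * (1 - measure P A + 1 / real (Suc k))) sequentially"
    by (simp add: AE_all_countable AE_conj_iff)
  then show ?thesis
    by (rule eventually_mono)
       (auto intro: tendsto_frequency_of_upper_bounds[OF count_in_add_count_in_Compl])
qed

section \<open>Deleting a value from an i.i.d. stream\<close>

(* If w equals z from some index on, first_other z w is an unspecified LEAST; sremove_SCons
   holds nevertheless, because such a tail satisfies z ## w = w. *)
definition first_other :: "'a \<Rightarrow> 'a stream \<Rightarrow> nat" where
  "first_other z w = (LEAST i. w !! i \<noteq> z)"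

primcorec sremove :: "'a \<Rightarrow> 'a stream \<Rightarrow> 'a stream" where
  "sremove z w = w !! first_other z w ## sremove z (sdrop (Suc (first_other z w)) w)"

lemma sremove_SCons: "sremove z (x ## w) = (if x = z then sremove z w else x ## sremove z w)"
proof (cases "x = z")
  case False
  then have "first_other z (x ## w) = 0"
    unfolding first_other_def by (intro Least_eq_0) simp
  with False show ?thesis by (subst sremove.code) simp
next
  case True
  show ?thesis
  proof (cases "\<exists>i. w !! i \<noteq> z")
    case True
    then obtain i where "w !! i \<noteq> z" by blast
    then have "first_other z (z ## w) = Suc (first_other z w)"
      unfolding first_other_def by (subst Least_Suc[of _ "Suc i"]) auto
    then show ?thesis
      using \<open>x = z\<close> by (subst (1 2) sremove.code) simp
  next
    case False
    then have "snth (z ## w) = snth w"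
      by (auto simp: fun_eq_iff Stream_snth split: nat.split)
    then have "z ## w = w"
      by (metis stream_smap_nats)
    then show ?thesis using \<open>x = z\<close> by simp
  qed
qed

lemma stake_sremove:
  "stake (count_in (- {z}) n w) (sremove z w) = filter (\<lambda>x. x \<noteq> z) (stake n w)"
proof (induction n arbitrary: w)
  case (Suc n)
  obtain x u where "w = x ## u" by (metis stream.collapse)
  then show ?case using Suc[of u] by (simp add: count_in_SCons sremove_SCons)
qed simp

lemma measurable_first_other [measurable]:
  "first_other z \<in> measurable (stream_space (measure_pmf P)) (count_space UNIV)"
  unfolding first_other_def by measurable

lemma measurable_sremove [measurable]:
  "sremove z \<in> measurable (stream_space (measure_pmf P)) (stream_space (measure_pmf R))"
proof -
  let ?S = "stream_space (measure_pmf P)"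
  have "(\<lambda>w. sremove z (id w)) \<in> measurable ?S (stream_space (measure_pmf R))"
  proof (rule measurable_stream_coinduct
      [where F = "\<lambda>f. \<exists>g \<in> measurable ?S ?S. f = (\<lambda>w. sremove z (g w))"])
    fix f
    assume "\<exists>g \<in> measurable ?S ?S. f = (\<lambda>w. sremove z (g w))"
    then obtain g where g[measurable]: "g \<in> measurable ?S ?S" and f: "f = (\<lambda>w. sremove z (g w))"
      by blast
    have "(\<lambda>w. g w !! first_other z (g w)) \<in> measurable ?S (count_space UNIV)"
      by (rule measurable_compose_countable[where f = "\<lambda>i w. g w !! i"])
         (auto intro: measurable_compose[OF g])
    then show "(\<lambda>w. shd (f w)) \<in> measurable ?S (measure_pmf R)"
      unfolding f by simp
    have "(\<lambda>w. sdrop (Suc (first_other z (g w))) (g w)) \<in> measurable ?S ?S"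
      by (rule measurable_compose_countable[where f = "\<lambda>i w. sdrop (Suc i) (g w)"])
         (auto intro: measurable_compose[OF g])
    then show "\<exists>g \<in> measurable ?S ?S. (\<lambda>w. stl (f w)) = (\<lambda>w. sremove z (g w))"
      unfolding f by auto
  qed (auto intro: measurable_ident_sets)
  then show ?thesis by simp
qed

lemma measure_cond_pmf:
  assumes "set_pmf p \<inter> s \<noteq> {}"
  shows "measure (cond_pmf p s) X = measure p (s \<inter> X) / measure p s"
  using emeasure_measure_pmf_not_zero[OF assms]
  by (simp add: cond_pmf.rep_eq[OF assms] measure_pmf.emeasure_finite)

lemma measure_pmf_Compl_singleton: "measure (measure_pmf P) (- {z}) = 1 - pmf P z"
  using measure_pmf.prob_compl[of "{z}" P] by (simp add: Compl_eq_Diff_UNIV measure_pmf_single)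

lemma SCons_in_scylinder_Cons:
  "x ## w \<in> scylinder UNIV (X # Xs) \<longleftrightarrow> x \<in> X \<and> w \<in> scylinder UNIV Xs"
  by simp

lemma measure_sremove_scylinder_Cons:
  fixes P :: "'a pmf"
  assumes ne: "set_pmf P \<inter> - {z} \<noteq> {}"
  shows "measure (stream_space (measure_pmf P))
           (sremove z -` scylinder UNIV (X # Xs) \<inter> space (stream_space (measure_pmf P)))
       = measure (cond_pmf P (- {z})) X * measure (stream_space (measure_pmf P))
           (sremove z -` scylinder UNIV Xs \<inter> space (stream_space (measure_pmf P)))"
proof -
  let ?S = "stream_space (measure_pmf P)"
  interpret S: prob_space ?S
    by (rule prob_space.prob_space_stream_space) (rule measure_pmf.prob_space_axioms)
  define C where "C Xs = sremove z -` scylinder UNIV Xs \<inter> space ?S" for Xs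
  have C_sets: "C Xs \<in> sets ?S" for Xs
    using measurable_sets[OF measurable_sremove sets_scylinder[of Xs "measure_pmf P"]]
    by (simp add: C_def)
  (* Condition on the first individual: if it equals z, the event starts afresh. *)
  have "emeasure ?S (C (X # Xs))
      = (\<integral>\<^sup>+t. emeasure ?S {w \<in> space ?S. t ## w \<in> C (X # Xs)} \<partial>measure_pmf P)"
    by (rule prob_space.emeasure_stream_space[OF measure_pmf.prob_space_axioms C_sets])
  also have "\<dots> = (\<integral>\<^sup>+t. emeasure ?S (C (X # Xs)) * indicator {z} t
      + emeasure ?S (C Xs) * indicator (- {z} \<inter> X) t \<partial>measure_pmf P)"
  proof (intro nn_integral_cong)
    fix t
    have "{w \<in> space ?S. t ## w \<in> C (X # Xs)}
        = (if t = z then C (X # Xs) else if t \<in> X then C Xs else {})"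
      by (auto simp del: scylinder.simps
          simp: C_def sremove_SCons SCons_in_scylinder_Cons space_stream_space)
    then show "emeasure ?S {w \<in> space ?S. t ## w \<in> C (X # Xs)}
        = emeasure ?S (C (X # Xs)) * indicator {z} t + emeasure ?S (C Xs) * indicator (- {z} \<inter> X) t"
      by (simp split: split_indicator)
  qed
  also have "\<dots> = ennreal (measure ?S (C (X # Xs)) * pmf P z
      + measure ?S (C Xs) * measure P (- {z} \<inter> X))"
    by (subst nn_integral_add)
       (auto simp: nn_integral_cmult_indicator measure_pmf.emeasure_eq_measure measure_pmf_single
         S.emeasure_eq_measure ennreal_mult ennreal_plus)
  finally have "ennreal (measure ?S (C (X # Xs)))
      = ennreal (measure ?S (C (X # Xs)) * pmf P z + measure ?S (C Xs) * measure P (- {z} \<inter> X))"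
    by (simp only: S.emeasure_eq_measure)
  then have "measure ?S (C (X # Xs))
      = measure ?S (C (X # Xs)) * pmf P z + measure ?S (C Xs) * measure P (- {z} \<inter> X)"
    by (rule ennreal_inj[THEN iffD1, rotated 2]) simp_all
  then have "measure ?S (C (X # Xs)) * measure P (- {z})
      = measure ?S (C Xs) * measure P (- {z} \<inter> X)"
    unfolding measure_pmf_Compl_singleton right_diff_distrib mult_1_right by linarith
  moreover have "measure P (- {z}) > 0"
    using ne by (auto intro: measure_pmf_posI)
  ultimately have "measure ?S (C (X # Xs))
      = measure P (- {z} \<inter> X) / measure P (- {z}) * measure ?S (C Xs)"
    by (simp add: eq_divide_eq mult.commute)
  then show ?thesis
    unfolding C_def measure_cond_pmf[OF ne] .
qed

lemma distr_sremove_stream_space: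
  fixes P :: "'a pmf"
  assumes ne: "set_pmf P \<inter> - {z} \<noteq> {}"
  shows "distr (stream_space (measure_pmf P)) (stream_space (measure_pmf (cond_pmf P (- {z})))) (sremove z)
       = stream_space (measure_pmf (cond_pmf P (- {z})))"
    (is "?D = ?T")
proof -
  let ?S = "stream_space (measure_pmf P)"
  interpret S: prob_space ?S
    by (rule prob_space.prob_space_stream_space) (rule measure_pmf.prob_space_axioms)
  interpret T: prob_space ?T
    by (rule prob_space.prob_space_stream_space) (rule measure_pmf.prob_space_axioms)
  interpret D: prob_space ?D
    by (rule S.prob_space_distr) (rule measurable_sremove)
  have "emeasure ?D (scylinder UNIV Xs) = emeasure ?T (scylinder UNIV Xs)" for Xs
  proof (induction Xs)
    case Nil
    show ?case using D.emeasure_space_1 T.emeasure_space_1 by (simp add: space_stream_space)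
  next
    case (Cons X Xs)
    have cyl: "scylinder UNIV Ys \<in> sets ?T" for Ys
      using sets_scylinder[of Ys "measure_pmf (cond_pmf P (- {z}))"] by simp
    have "emeasure ?T (scylinder UNIV (X # Xs))
        = (\<integral>\<^sup>+t. emeasure ?T (scylinder UNIV Xs) * indicator X t \<partial>measure_pmf (cond_pmf P (- {z})))"
      by (subst prob_space.emeasure_stream_space[OF measure_pmf.prob_space_axioms cyl])
         (auto intro!: nn_integral_cong simp: space_stream_space split: split_indicator)
    also have "\<dots> = emeasure ?D (scylinder UNIV Xs) * measure (cond_pmf P (- {z})) X"
      by (simp add: Cons nn_integral_cmult_indicator measure_pmf.emeasure_eq_measure)
    also have "\<dots> = emeasure ?D (scylinder UNIV (X # Xs))"
      by (simp del: scylinder.simps add: emeasure_distr[OF measurable_sremove cyl] S.emeasure_eq_measure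
          measure_sremove_scylinder_Cons[OF ne] ennreal_mult'' mult.commute)
    finally show ?case ..
  qed
  then show ?thesis
    by (intro stream_space_eq_scylinder
        [where S = "measure_pmf (cond_pmf P (- {z}))" and G = UNIV and C = "{UNIV}"])
       (auto simp: Int_stable_def D.prob_space_axioms T.prob_space_axioms)
qed

section \<open>Models with the same law of observed patterns\<close>

definition list_counts :: "nat set list \<Rightarrow> nat set \<Rightarrow> nat" where
  "list_counts l x = (if x = {} then 0 else count_list l x)"

lemma counts_eq_list_counts: "counts N w = list_counts (stake N w)"
  by (auto simp: fun_eq_iff counts_def list_counts_def count_list_eq_length_filter
      length_filter_conv_card stake_nth eq_commute cong: conj_cong)

lemma list_counts_filter_nonempty: "list_counts (filter (\<lambda>x. x \<noteq> {}) l) = list_counts l"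
  by (auto simp: fun_eq_iff list_counts_def count_list_eq_length_filter filter_filter
      intro!: arg_cong[where f = length] filter_cong)

lemma nobs_eq_count_in: "nobs N w = count_in (- {{}}) N w"
  by (simp add: nobs_def count_in_def)

lemma counts_sremove: "counts N w = counts (nobs N w) (sremove {} w)"
  by (simp add: counts_eq_list_counts nobs_eq_count_in stake_sremove list_counts_filter_nonempty)

(* The stream space over nat set carries only the product sigma-algebra, under which a function
   of a whole prefix need not be measurable; coding the (finite) patterns into nat makes it so. *)
definition finite_code :: "nat set \<Rightarrow> nat" where
  "finite_code = to_nat_on {x. finite x}"

definition finite_decode :: "nat \<Rightarrow> nat set" where
  "finite_decode = from_nat_into {x. finite x}"

lemma finite_decode_code [simp]: "finite x \<Longrightarrow> finite_decode (finite_code x) = x"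
  by (simp add: finite_code_def finite_decode_def countable_Collect_finite)

lemma measurable_tendsto_counts_smap_finite_code:
  fixes E :: "(nat set \<Rightarrow> nat) \<Rightarrow> real"
  shows "Measurable.pred (stream_space (measure_pmf R))
     (\<lambda>v. (\<lambda>k. E (counts k (smap (finite_decode \<circ> finite_code) v)) / real k) \<longlonglongrightarrow> c)"
proof (rule measurable_limit)
  fix k
  have "(\<lambda>v. stake k (smap finite_code v)) \<in> measurable (stream_space (measure_pmf R)) (count_space UNIV)"
    by (rule measurable_compose[OF measurable_smap measurable_stake]) simp
  then have "(\<lambda>v. E (list_counts (map finite_decode (stake k (smap finite_code v)))) / real k)
      \<in> borel_measurable (stream_space (measure_pmf R))"
    by (rule measurable_compose) simp
  then show "(\<lambda>v. E (counts k (smap (finite_decode \<circ> finite_code) v)) / real k)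
      \<in> borel_measurable (stream_space (measure_pmf R))"
    by (simp add: counts_eq_list_counts stake_smap)
qed

lemma surj_count_in:
  assumes "filterlim (\<lambda>n. count_in A n w) at_top sequentially"
  shows "surj (\<lambda>n. count_in A n w)"
proof -
  have "\<exists>n. count_in A n w = k" for k
  proof -
    obtain n where "k \<le> count_in A n w"
      using assms by (auto simp: filterlim_at_top eventually_sequentially)
    define n0 where "n0 = (LEAST n. k \<le> count_in A n w)"
    have n0: "k \<le> count_in A n0 w"
      unfolding n0_def by (rule LeastI) fact
    show ?thesis
    proof (cases n0)
      case 0
      with n0 show ?thesis by (intro exI[of _ 0]) simp
    next
      case (Suc m)
      then have "\<not> k \<le> count_in A m w"
        unfolding n0_def by (metis lessI not_less_Least)
      with n0 Suc show ?thesis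
        by (intro exI[of _ n0]) (auto simp: count_in_Suc split: if_splits)
    qed
  qed
  then show ?thesis by (metis surjI)
qed

lemma LIMSEQ_of_LIMSEQ_comp_surj:
  fixes h :: "nat \<Rightarrow> 'a::metric_space"
  assumes lim: "(\<lambda>n. h (\<phi> n)) \<longlonglongrightarrow> c" and "surj \<phi>"
  shows "h \<longlonglongrightarrow> c"
proof (rule metric_LIMSEQ_I)
  fix r :: real
  assume "0 < r"
  then obtain N where N: "\<And>n. n \<ge> N \<Longrightarrow> dist (h (\<phi> n)) c < r"
    using metric_LIMSEQ_D[OF lim] by blast
  define B where "B = Max (insert 0 (\<phi> ` {..<N}))"
  have "dist (h k) c < r" if "k > B" for k
  proof -
    obtain n where "k = \<phi> n" using \<open>surj \<phi>\<close> by blast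
    moreover have "n \<ge> N"
      using that \<open>k = \<phi> n\<close> Max_ge[of "insert 0 (\<phi> ` {..<N})" "\<phi> n"]
      by (force simp: B_def not_le)
    ultimately show ?thesis using N by blast
  qed
  then show "\<exists>no. \<forall>k\<ge>no. dist (h k) c < r"
    by (intro exI[of _ "Suc B"]) auto
qed

lemma filterlim_count_in_at_top:
  assumes "(\<lambda>n. real (count_in A n w) / real n) \<longlonglongrightarrow> \<beta>" "\<beta> > 0"
  shows "filterlim (\<lambda>n. count_in A n w) at_top sequentially"
proof -
  have "filterlim (\<lambda>n. real (count_in A n w) / real n * real n) at_top sequentially"
    by (rule filterlim_tendsto_pos_mult_at_top[OF assms filterlim_real_sequentially])
  moreover have "eventually (\<lambda>n. real (count_in A n w) / real n * real n = real (count_in A n w)) sequentially"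
    using eventually_gt_at_top[of 0] by eventually_elim simp
  ultimately have "filterlim (\<lambda>n. real (count_in A n w)) at_top sequentially"
    by (simp add: filterlim_cong)
  then show ?thesis
    by (simp add: filterlim_sequentially_iff_filterlim_real[symmetric])
qed

lemma tendsto_counts_over_nobs_iff:
  fixes E :: "(nat set \<Rightarrow> nat) \<Rightarrow> real"
  assumes "(\<lambda>N. real (nobs N w) / real N) \<longlonglongrightarrow> \<beta>" "\<beta> > 0"
  shows "(\<lambda>N. E (counts N w) / real (nobs N w)) \<longlonglongrightarrow> c \<longleftrightarrow>
         (\<lambda>k. E (counts k (sremove {} w)) / real k) \<longlonglongrightarrow> c"
proof -
  define h where "h = (\<lambda>k. E (counts k (sremove {} w)) / real k)"
  have to_top: "filterlim (\<lambda>N. nobs N w) at_top sequentially"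
    using filterlim_count_in_at_top assms unfolding nobs_eq_count_in by blast
  have "(\<lambda>N. E (counts N w) / real (nobs N w)) = (\<lambda>N. h (nobs N w))"
    by (subst counts_sremove) (simp add: h_def)
  then show ?thesis
    unfolding h_def[symmetric]
  proof (simp only:, intro iffI)
    assume "(\<lambda>N. h (nobs N w)) \<longlonglongrightarrow> c"
    moreover have "surj (\<lambda>N. nobs N w)"
      using surj_count_in to_top unfolding nobs_eq_count_in by blast
    ultimately show "h \<longlonglongrightarrow> c"
      by (rule LIMSEQ_of_LIMSEQ_comp_surj)
  next
    assume "h \<longlonglongrightarrow> c"
    then show "(\<lambda>N. h (nobs N w)) \<longlonglongrightarrow> c"
      by (rule filterlim_compose[OF _ to_top])
  qed
qed

lemma AE_cond_pmf_of_AE_sremove: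
  fixes Q :: "nat set pmf" and E :: "(nat set \<Rightarrow> nat) \<Rightarrow> real"
  assumes fin: "set_pmf Q \<subseteq> {x. finite x}" and ne: "set_pmf Q \<inter> - {{}} \<noteq> {}"
    and AE_Q: "AE w in stream_space (measure_pmf Q). (\<lambda>k. E (counts k (sremove {} w)) / real k) \<longlonglongrightarrow> c"
  shows "AE v in stream_space (measure_pmf (cond_pmf Q (- {{}}))). (\<lambda>k. E (counts k v) / real k) \<longlonglongrightarrow> c"
proof -
  let ?SQ = "stream_space (measure_pmf Q)"
  let ?SR = "stream_space (measure_pmf (cond_pmf Q (- {{}})))"
  let ?f = "smap (finite_decode \<circ> finite_code)"
  have meas: "sremove {} \<in> measurable ?SQ ?SR"
    by (rule measurable_sremove)
  have law: "distr ?SQ ?SR (sremove {}) = ?SR"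
    by (rule distr_sremove_stream_space[OF ne])
  have "AE v in ?SR. stream_all finite v"
    using fin ne by (intro prob_space.AE_stream_all measure_pmf.prob_space_axioms)
      (auto simp: AE_measure_pmf_iff)
  then have fixed: "AE v in ?SR. ?f v = v"
    by (rule eventually_mono) (auto intro: stream.map_ident_strong)
  then have "AE v in distr ?SQ ?SR (sremove {}). ?f v = v"
    unfolding law .
  then have "AE w in ?SQ. ?f (sremove {} w) = sremove {} w"
    by (rule AE_distrD[OF meas])
  with AE_Q have "AE w in ?SQ. (\<lambda>k. E (counts k (?f (sremove {} w))) / real k) \<longlonglongrightarrow> c"
    by eventually_elim simp
  then have "AE v in distr ?SQ ?SR (sremove {}). (\<lambda>k. E (counts k (?f v)) / real k) \<longlonglongrightarrow> c"
    by (subst AE_distr_iff[OF meas predE[OF measurable_tendsto_counts_smap_finite_code]])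
  then have "AE v in ?SR. (\<lambda>k. E (counts k (?f v)) / real k) \<longlonglongrightarrow> c"
    unfolding law .
  with fixed show ?thesis
    by eventually_elim simp
qed

lemma AE_counts_over_nobs_tendsto:
  fixes P Q :: "nat set pmf" and E :: "(nat set \<Rightarrow> nat) \<Rightarrow> real"
  assumes fin: "set_pmf Q \<subseteq> {x. finite x}"
    and Q_obs: "set_pmf Q \<inter> - {{}} \<noteq> {}" and P_obs: "set_pmf P \<inter> - {{}} \<noteq> {}"
    and same_observed: "cond_pmf P (- {{}}) = cond_pmf Q (- {{}})"
    and consistent: "AE w in stream_space (measure_pmf Q). (\<lambda>N. E (counts N w) / real N) \<longlonglongrightarrow> 1"
  shows "AE w in stream_space (measure_pmf P).
           (\<lambda>N. E (counts N w) / real (nobs N w)) \<longlonglongrightarrow> 1 / measure Q (- {{}})"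
proof -
  let ?SP = "stream_space (measure_pmf P)"
  let ?SR = "stream_space (measure_pmf (cond_pmf Q (- {{}})))"
  let ?c = "1 / measure Q (- {{}})"
  have pos: "measure P (- {{}}) > 0" "measure Q (- {{}}) > 0"
    using P_obs Q_obs by (auto intro: measure_pmf_posI)
  have freq: "AE w in stream_space (measure_pmf R).
      (\<lambda>N. real (nobs N w) / real N) \<longlonglongrightarrow> measure R (- {{}})" for R
    unfolding nobs_eq_count_in by (rule AE_frequency_tendsto)
  have "AE w in stream_space (measure_pmf Q).
      (\<lambda>N. E (counts N w) / real (nobs N w)) \<longlonglongrightarrow> ?c"
    using consistent freq
  proof eventually_elim
    case (elim w)
    have "(\<lambda>N. (E (counts N w) / real N) / (real (nobs N w) / real N)) \<longlonglongrightarrow> ?c"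
      using elim pos by (intro tendsto_divide) auto
    moreover have "eventually (\<lambda>N. (E (counts N w) / real N) / (real (nobs N w) / real N)
        = E (counts N w) / real (nobs N w)) sequentially"
      using eventually_gt_at_top[of 0] by eventually_elim simp
    ultimately show ?case
      by (rule Lim_transform_eventually)
  qed
  with freq have "AE w in stream_space (measure_pmf Q).
      (\<lambda>k. E (counts k (sremove {} w)) / real k) \<longlonglongrightarrow> ?c"
    by eventually_elim (use pos tendsto_counts_over_nobs_iff in blast)
  then have "AE v in ?SR. (\<lambda>k. E (counts k v) / real k) \<longlonglongrightarrow> ?c"
    by (rule AE_cond_pmf_of_AE_sremove[OF fin Q_obs])
  then have "AE v in distr ?SP ?SR (sremove {}). (\<lambda>k. E (counts k v) / real k) \<longlonglongrightarrow> ?c"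
    unfolding same_observed[symmetric] distr_sremove_stream_space[OF P_obs] .
  then have "AE w in ?SP. (\<lambda>k. E (counts k (sremove {} w)) / real k) \<longlonglongrightarrow> ?c"
    by (rule AE_distrD[OF measurable_sremove])
  with freq show ?thesis
    by eventually_elim (use pos tendsto_counts_over_nobs_iff in blast)
qed

section \<open>Rescaling the probability of non-observation\<close>

definition reweight_pmf :: "'a pmf \<Rightarrow> 'a \<Rightarrow> real \<Rightarrow> 'a pmf" where
  "reweight_pmf P z t =
     embed_pmf (\<lambda>x. (if x = z then t else 1) * pmf P x / (1 - pmf P z + t * pmf P z))"

lemma reweight_normalizer_pos:
  fixes P :: "'a pmf"
  assumes "t > 0"
  shows "1 - pmf P z + t * pmf P z > 0"
proof (cases "pmf P z = 1")
  case False
  then have "pmf P z < 1" using pmf_le_1[of P z] by linarith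
  then show ?thesis using assms by (simp add: add_pos_nonneg)
qed (use assms in simp)

lemma pmf_reweight_pmf:
  fixes P :: "'a pmf"
  assumes "t > 0"
  shows "pmf (reweight_pmf P z t) x = (if x = z then t else 1) * pmf P x / (1 - pmf P z + t * pmf P z)"
proof -
  define D where "D = 1 - pmf P z + t * pmf P z"
  define f where "f = (\<lambda>x. (if x = z then t else 1) * pmf P x / D)"
  have D: "D > 0" unfolding D_def by (rule reweight_normalizer_pos[OF assms])
  have f_nonneg: "0 \<le> f x" for x
    using assms D by (simp add: f_def)
  define a b where "a = t / D" and "b = 1 / D"
  have ab: "a \<ge> 0" "b \<ge> 0" using assms D by (simp_all add: a_def b_def)
  have "(\<integral>\<^sup>+x. ennreal (f x) \<partial>count_space UNIV)
      = (\<integral>\<^sup>+x. ennreal a * indicator {z} x + ennreal b * indicator (- {z}) x \<partial>measure_pmf P)"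
    unfolding nn_integral_measure_pmf using ab
    by (intro nn_integral_cong)
       (auto simp: f_def a_def b_def ennreal_mult''[symmetric] mult.commute split: split_indicator)
  also have "\<dots> = ennreal a * ennreal (pmf P z) + ennreal b * ennreal (measure P (- {z}))"
    by (simp add: nn_integral_add nn_integral_cmult_indicator measure_pmf.emeasure_eq_measure
        measure_pmf_single)
  also have "\<dots> = ennreal (a * pmf P z + b * measure P (- {z}))"
    using ab by (simp add: ennreal_mult ennreal_plus)
  also have "measure P (- {z}) = 1 - pmf P z"
    by (rule measure_pmf_Compl_singleton)
  also have "a * pmf P z + b * (1 - pmf P z) = (t * pmf P z + (1 - pmf P z)) / D"
    unfolding a_def b_def by (simp add: add_divide_distrib)
  also have "t * pmf P z + (1 - pmf P z) = D"
    by (simp add: D_def)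
  also have "D / D = 1"
    using D by simp
  finally have "pmf (embed_pmf f) x = f x"
    by (intro pmf_embed_pmf f_nonneg) simp
  then show ?thesis
    by (simp add: reweight_pmf_def f_def D_def)
qed

lemma set_pmf_reweight_pmf:
  fixes P :: "'a pmf"
  assumes "t > 0"
  shows "set_pmf (reweight_pmf P z t) = set_pmf P"
  using assms reweight_normalizer_pos[OF assms, of P z]
  by (auto simp: set_pmf_iff pmf_reweight_pmf[OF assms])

lemma measure_reweight_pmf_Compl:
  fixes P :: "'a pmf"
  assumes "t > 0"
  shows "measure (reweight_pmf P z t) (- {z}) = (1 - pmf P z) / (1 - pmf P z + t * pmf P z)"
proof -
  have D: "1 - pmf P z + t * pmf P z > 0" by (rule reweight_normalizer_pos[OF assms])
  have "measure (reweight_pmf P z t) (- {z}) = 1 - pmf (reweight_pmf P z t) z"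
    by (rule measure_pmf_Compl_singleton)
  also have "\<dots> = (1 - pmf P z) / (1 - pmf P z + t * pmf P z)"
    using D by (simp add: pmf_reweight_pmf[OF assms] field_simps)
  finally show ?thesis .
qed

lemma cond_pmf_reweight_pmf:
  fixes P :: "'a pmf"
  assumes "t > 0" and ne: "set_pmf P \<inter> - {z} \<noteq> {}"
  shows "cond_pmf (reweight_pmf P z t) (- {z}) = cond_pmf P (- {z})"
proof (rule pmf_eqI)
  fix x
  have ne': "set_pmf (reweight_pmf P z t) \<inter> - {z} \<noteq> {}"
    using ne by (simp add: set_pmf_reweight_pmf[OF assms(1)])
  have "measure P (- {z}) = 1 - pmf P z"
    by (rule measure_pmf_Compl_singleton)
  moreover have "1 - pmf P z + t * pmf P z > 0" by (rule reweight_normalizer_pos[OF assms(1)])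
  moreover have "measure P (- {z}) > 0"
    using ne by (auto intro: measure_pmf_posI)
  ultimately show "pmf (cond_pmf (reweight_pmf P z t) (- {z})) x = pmf (cond_pmf P (- {z})) x"
    by (simp add: pmf_cond[OF ne'] pmf_cond[OF ne] pmf_reweight_pmf[OF assms(1)]
        measure_reweight_pmf_Compl[OF assms(1)])
qed

lemma sum_Pow_minus_one_power_card:
  assumes "finite A" "A \<noteq> {}"
  shows "(\<Sum>x\<in>Pow A. (-1::real) ^ card x) = 0"
proof (rule sum_alternating_cancels)
  show "finite (Pow A)" using assms(1) by simp
  show "card {x \<in> Pow A. even (card x)} = card {x \<in> Pow A. odd (card x)}"
    using card_subsupersets_even_odd[of A "{}"] assms by auto
qed

lemma full_interaction_reweight_pmf:
  fixes P :: "nat set pmf"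
  assumes L: "L \<ge> 1" and supp: "set_pmf P = Pow {..<L}" and t: "t > 0"
  shows "full_interaction L (reweight_pmf P {} t) = full_interaction L P - ln t"
proof -
  define D where "D = 1 - pmf P {} + t * pmf P {}"
  define \<sigma> :: "nat set \<Rightarrow> real" where "\<sigma> x = (-1) ^ (card x + 1)" for x
  have D: "D > 0" unfolding D_def by (rule reweight_normalizer_pos[OF t])
  have ln_pmf: "ln (pmf (reweight_pmf P {} t) x) = ln (pmf P x) - ln D + (if x = {} then ln t else 0)"
    if "x \<in> Pow {..<L}" for x
  proof -
    have "pmf P x > 0" using that supp by (simp add: pmf_positive_iff)
    then show ?thesis
      using t D by (simp add: pmf_reweight_pmf[OF t] D_def[symmetric] ln_mult ln_div)
  qed
  have "full_interaction L (reweight_pmf P {} t)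
      = (\<Sum>x\<in>Pow {..<L}. \<sigma> x * ln (pmf P x) - ln D * \<sigma> x + (if x = {} then - ln t else 0))"
    unfolding full_interaction_def \<sigma>_def[symmetric]
  proof (intro sum.cong refl)
    fix x
    assume "x \<in> Pow {..<L}"
    then show "\<sigma> x * ln (pmf (reweight_pmf P {} t) x)
        = \<sigma> x * ln (pmf P x) - ln D * \<sigma> x + (if x = {} then - ln t else 0)"
      by (cases "x = {}") (simp_all add: ln_pmf \<sigma>_def algebra_simps)
  qed
  also have "\<dots> = full_interaction L P - ln D * (\<Sum>x\<in>Pow {..<L}. \<sigma> x) - ln t"
    unfolding full_interaction_def \<sigma>_def[symmetric]
    by (simp add: sum.distrib sum_subtractf sum_distrib_left)
  also have "(\<Sum>x\<in>Pow {..<L}. \<sigma> x) = 0"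
    using sum_Pow_minus_one_power_card[of "{..<L}"] L by (simp add: \<sigma>_def sum_negf lessThan_empty_iff)
  finally show ?thesis by simp
qed

theorem corollary1:
  fixes L :: nat and E :: "(nat set \<Rightarrow> nat) \<Rightarrow> real" and P :: "nat set pmf"
  assumes "L \<ge> 2"
    and "consistent_gamma0 L E"
    and "set_pmf P = Pow {..<L}"
  shows "AE w in stream_space (measure_pmf P).
           (\<lambda>N. E (counts N w) / real (nobs N w))
             \<longlonglongrightarrow> 1 + pmf P {} / (1 - pmf P {}) * exp (full_interaction L P)"
proof -
  define Q where "Q = reweight_pmf P {} (exp (full_interaction L P))"
  have L: "L \<ge> 1" using assms(1) by simp
  have set_Q: "set_pmf Q = Pow {..<L}"
    by (simp add: Q_def set_pmf_reweight_pmf assms(3))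
  have P_obs: "set_pmf P \<inter> - {{}} \<noteq> {}" and Q_obs: "set_pmf Q \<inter> - {{}} \<noteq> {}"
    using L by (auto simp: assms(3) set_Q intro!: exI[of _ "{0}"])
  have "full_interaction L Q = 0"
    using full_interaction_reweight_pmf[OF L assms(3) exp_gt_zero] by (simp add: Q_def)
  then have "AE w in stream_space (measure_pmf Q). (\<lambda>N. E (counts N w) / real N) \<longlonglongrightarrow> 1"
    using assms(2) set_Q unfolding consistent_gamma0_def by blast
  moreover have "set_pmf Q \<subseteq> {x. finite x}"
    using set_Q by (auto intro: finite_subset)
  moreover have "cond_pmf P (- {{}}) = cond_pmf Q (- {{}})"
    unfolding Q_def by (rule cond_pmf_reweight_pmf[OF exp_gt_zero P_obs, symmetric])
  ultimately have "AE w in stream_space (measure_pmf P).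
      (\<lambda>N. E (counts N w) / real (nobs N w)) \<longlonglongrightarrow> 1 / measure Q (- {{}})"
    by (intro AE_counts_over_nobs_tendsto P_obs Q_obs)
  moreover have "1 - pmf P {} > 0"
    using P_obs by (auto simp flip: measure_pmf_Compl_singleton intro: measure_pmf_posI)
  then have "1 / measure Q (- {{}}) = 1 + pmf P {} / (1 - pmf P {}) * exp (full_interaction L P)"
    by (simp add: Q_def measure_reweight_pmf_Compl field_simps)
  ultimately show ?thesis by simp
qed

end
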